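(* Let $m,n$ be natural numbers and let $F_{ij}=\int_{-1}^{1}P_{i-1}(\eta)\,\eta^{j-1}\,d\eta$. For each natural $k$ let $\mathbf f_{k,\bullet}=(F_{k1},F_{k2},\dots,F_{k,n+1})^T$, and let $\mathbf f'=(F_{1,m+1},F_{1,m+2},\dots,F_{1,m+n+1})^T$. Then $\mathbf f'$ is a linear combination of the vectors $\mathbf f_{\delta,\bullet},\mathbf f_{\delta+2,\bullet},\dots,\mathbf f_{m+1,\bullet}$, where $\delta=1$ if $m$ is even and $\delta=2$ if $m$ is odd.
   Context: $P_k$ denotes the Legendre polynomial of degree $k$; $F=(F_{ij})$ is the matrix of moments of the Legendre polynomials. *)

theory Defs
  imports "HOL-Analysis.Analysis" "HOL-Computational_Algebra.Polynomial"
begin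

fun legendre :: "nat \<Rightarrow> real poly" where
  "legendre 0 = 1"
| "legendre (Suc 0) = [:0, 1:]"
| "legendre (Suc (Suc k)) =
     smult (1 / real (k + 2))
       (smult (real (2 * k + 3)) ([:0, 1:] * legendre (Suc k)) - smult (real (k + 1)) (legendre k))"

definition legendre_moment :: "nat \<Rightarrow> nat \<Rightarrow> real" where
  "legendre_moment i j = integral {-1..1} (\<lambda>\<eta>::real. poly (legendre (i - 1)) \<eta> * \<eta> ^ (j - 1))"

end

theory Submission
  imports Defs
begin

text \<open>By Bonnet's recurrence x P_k is a combination of P_(k+1) and P_(k-1), so by induction
  x^m is a combination of the P_i with i \<le> m and i \<equiv> m (mod 2). Multiplying by
  \<eta>^(j-1) and integrating over [-1,1] expresses F_(1,m+j) through the moments F_(i+1,j)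
  with these indices i, uniformly in j.\<close>

definition same_parity_upto :: "nat \<Rightarrow> nat set" where
  "same_parity_upto m = {i. i \<le> m \<and> even (m + i)}"

definition legendre_span :: "nat \<Rightarrow> real poly set" where
  "legendre_span m =
     {p. \<exists>c. p = (\<Sum>i\<in>same_parity_upto m. smult (c i) (legendre i))}"

lemma legendre_spanI:
  "p = (\<Sum>i\<in>same_parity_upto m. smult (c i) (legendre i)) \<Longrightarrow> p \<in> legendre_span m"
  unfolding legendre_span_def by blast

lemma finite_same_parity_upto: "finite (same_parity_upto m)"
  unfolding same_parity_upto_def by (rule finite_subset[of _ "{..m}"]) auto

lemma legendre_span_zero: "0 \<in> legendre_span m"
  by (rule legendre_spanI[where c = "\<lambda>_. 0"]) simp

lemma legendre_span_add:
  assumes "p \<in> legendre_span m" "q \<in> legendre_span m"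
  shows "p + q \<in> legendre_span m"
proof -
  obtain c d where "p = (\<Sum>i\<in>same_parity_upto m. smult (c i) (legendre i))"
    and "q = (\<Sum>i\<in>same_parity_upto m. smult (d i) (legendre i))"
    using assms unfolding legendre_span_def by blast
  then have "p + q = (\<Sum>i\<in>same_parity_upto m. smult (c i + d i) (legendre i))"
    by (simp add: sum.distrib smult_add_left)
  then show ?thesis by (rule legendre_spanI)
qed

lemma smult_sum: "smult a (\<Sum>i\<in>S. f i) = (\<Sum>i\<in>S. smult a (f i))"
  by (induct S rule: infinite_finite_induct) (auto simp: smult_add_right)

lemma legendre_span_smult:
  assumes "p \<in> legendre_span m"
  shows "smult a p \<in> legendre_span m"
proof -
  obtain c where "p = (\<Sum>i\<in>same_parity_upto m. smult (c i) (legendre i))"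
    using assms unfolding legendre_span_def by blast
  then have "smult a p = (\<Sum>i\<in>same_parity_upto m. smult (a * c i) (legendre i))"
    by (simp add: smult_sum)
  then show ?thesis by (rule legendre_spanI)
qed

lemma legendre_span_sum:
  "finite A \<Longrightarrow> (\<And>a. a \<in> A \<Longrightarrow> f a \<in> legendre_span m) \<Longrightarrow> sum f A \<in> legendre_span m"
  by (induction A rule: finite_induct) (auto intro: legendre_span_zero legendre_span_add)

lemma legendre_in_legendre_span:
  assumes "k \<in> same_parity_upto m"
  shows "legendre k \<in> legendre_span m"
proof -
  have "legendre k =
      (\<Sum>i\<in>same_parity_upto m. smult (if i = k then 1 else 0) (legendre i))"
    using assms finite_same_parity_upto[of m]
    by (simp add: if_distrib[of "\<lambda>c. smult c _"] cong: if_cong)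
  then show ?thesis by (rule legendre_spanI)
qed

lemma x_times_legendre_Suc:
  "[:0, 1:] * legendre (Suc k) =
     smult (1 / real (2 * k + 3))
       (smult (real (k + 2)) (legendre (Suc (Suc k))) + smult (real (k + 1)) (legendre k))"
proof -
  have "smult (real (2 * k + 3)) ([:0, 1:] * legendre (Suc k)) =
        smult (real (k + 2)) (legendre (Suc (Suc k))) + smult (real (k + 1)) (legendre k)"
    by (simp add: algebra_simps)
  then have "smult (1 / real (2 * k + 3)) (smult (real (2 * k + 3)) ([:0, 1:] * legendre (Suc k))) =
        smult (1 / real (2 * k + 3))
          (smult (real (k + 2)) (legendre (Suc (Suc k))) + smult (real (k + 1)) (legendre k))"
    by simp
  then show ?thesis by (simp del: of_nat_add of_nat_mult)
qed

lemma x_times_legendre_in_legendre_span: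
  assumes "k \<in> same_parity_upto m"
  shows "[:0, 1:] * legendre k \<in> legendre_span (Suc m)"
proof (cases k)
  case 0
  then show ?thesis
    using assms legendre_in_legendre_span[of 1 "Suc m"] by (simp add: same_parity_upto_def)
next
  case (Suc j)
  have "Suc (Suc j) \<in> same_parity_upto (Suc m)" "j \<in> same_parity_upto (Suc m)"
    using assms Suc by (auto simp: same_parity_upto_def)
  then have "legendre (Suc (Suc j)) \<in> legendre_span (Suc m)" "legendre j \<in> legendre_span (Suc m)"
    using legendre_in_legendre_span by blast+
  then show ?thesis
    unfolding Suc x_times_legendre_Suc by (intro legendre_span_smult legendre_span_add)
qed

lemma x_power_in_legendre_span: "[:0, 1:] ^ m \<in> legendre_span m"
proof (induction m)
  case 0
  then show ?case using legendre_in_legendre_span[of 0 0] by (simp add: same_parity_upto_def)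
next
  case (Suc m)
  then obtain c where c: "[:0, 1:] ^ m = (\<Sum>i\<in>same_parity_upto m. smult (c i) (legendre i))"
    unfolding legendre_span_def by blast
  have "[:0, 1:] ^ Suc m = (\<Sum>i\<in>same_parity_upto m. smult (c i) ([:0, 1:] * legendre i))"
    by (simp add: c sum_distrib_left mult_smult_right)
  also have "\<dots> \<in> legendre_span (Suc m)"
    by (intro legendre_span_sum finite_same_parity_upto legendre_span_smult
        x_times_legendre_in_legendre_span)
  finally show ?case .
qed

lemma moment_of_legendre_combination:
  assumes "\<And>x. x ^ m = (\<Sum>i\<in>same_parity_upto m. c i * poly (legendre i) x)" "j \<ge> 1"
  shows "legendre_moment 1 (m + j) =
           (\<Sum>i\<in>same_parity_upto m. c i * legendre_moment (Suc i) j)"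
proof -
  have "legendre_moment 1 (m + j) = integral {-1..1} (\<lambda>x::real. x ^ m * x ^ (j - 1))"
    unfolding legendre_moment_def using assms(2) by (simp add: power_add[symmetric])
  also have "\<dots> = integral {-1..1}
      (\<lambda>x. \<Sum>i\<in>same_parity_upto m. c i * (poly (legendre i) x * x ^ (j - 1)))"
    by (simp add: assms(1) sum_distrib_right mult.assoc)
  also have "\<dots> = (\<Sum>i\<in>same_parity_upto m.
      c i * integral {-1..1} (\<lambda>x. poly (legendre i) x * x ^ (j - 1)))"
    by (subst integral_sum)
      (auto intro!: integrable_continuous_interval continuous_intros finite_same_parity_upto)
  finally show ?thesis unfolding legendre_moment_def by simp
qed

lemma parity_index_set_eq_Suc_image:
  fixes m :: nat
  defines "\<delta> \<equiv> (if even m then 1 else 2 :: nat)"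
  shows "{k. \<delta> \<le> k \<and> k \<le> m + 1 \<and> even (k - \<delta>)} = Suc ` same_parity_upto m"
proof (rule set_eqI, rule iffI)
  fix k assume "k \<in> {k. \<delta> \<le> k \<and> k \<le> m + 1 \<and> even (k - \<delta>)}"
  then have "k - 1 \<in> same_parity_upto m" "k = Suc (k - 1)"
    unfolding \<delta>_def same_parity_upto_def by (auto split: if_splits)
  then show "k \<in> Suc ` same_parity_upto m" by blast
next
  fix k assume "k \<in> Suc ` same_parity_upto m"
  then show "k \<in> {k. \<delta> \<le> k \<and> k \<le> m + 1 \<and> even (k - \<delta>)}"
    unfolding \<delta>_def same_parity_upto_def by auto presburger+
qed

theorem lemma3:
  fixes m n :: nat
  defines "\<delta> \<equiv> (if even m then 1 else 2 :: nat)"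
  shows "\<exists>c :: nat \<Rightarrow> real. \<forall>j \<in> {1..n+1}.
           legendre_moment 1 (m + j) =
             (\<Sum>k \<in> {k. \<delta> \<le> k \<and> k \<le> m + 1 \<and> even (k - \<delta>)}. c k * legendre_moment k j)"
proof -
  obtain c where c: "[:0, 1:] ^ m = (\<Sum>i\<in>same_parity_upto m. smult (c i) (legendre i))"
    using x_power_in_legendre_span[of m] unfolding legendre_span_def by blast
  have power: "x ^ m = (\<Sum>i\<in>same_parity_upto m. c i * poly (legendre i) x)" for x :: real
    using arg_cong[OF c, of "\<lambda>p. poly p x"] by (simp add: poly_power poly_sum)
  have "legendre_moment 1 (m + j) =
      (\<Sum>k \<in> Suc ` same_parity_upto m. c (k - 1) * legendre_moment k j)" if "j \<ge> 1" for j
    using moment_of_legendre_combination[OF power that] by (simp add: sum.reindex)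
  then show ?thesis
    unfolding \<delta>_def parity_index_set_eq_Suc_image[of m] by auto
qed

end
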